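(* Let $\mathcal A$ be a GDN superalgebra. Then for every integer $n\ge1$, $\mathcal A^n_L$ is an ideal of $\mathcal A$, and $(\mathcal A^2)^n\subseteq\mathcal A^{n+1}_L$.
   Context: A GDN superalgebra is a superalgebra $\mathcal A=\mathcal A_0\oplus\mathcal A_1$ over a field (product $\circ$, $\mathcal A_i\circ\mathcal A_j\subseteq\mathcal A_{i+j}$ mod 2, $|x|=i$ for nonzero $x\in\mathcal A_i$) satisfying for homogeneous $x,y,z$: $x\circ(y\circ z)-(x\circ y)\circ z=(-1)^{|x||y|}(y\circ(x\circ z)-(y\circ x)\circ z)$ and $(x\circ y)\circ z=(-1)^{|y||z|}(x\circ z)\circ y$. For subspaces $\mathcal V_i$, $[\mathcal V_1,\dots,\mathcal V_n]_L$ is the span of $((\cdots(x_1\circ x_2)\cdots)\circ x_n)$ with $x_i\in\mathcal V_i$, and $\mathcal A^n_L=[\mathcal A,\dots,\mathcal A]_L$ ($n$ copies). For a subspace $\mathcal V$, $\mathcal V^1=\mathcal V$ and $\mathcal V^n=\sum_{i=1}^{n-1}\mathcal V^i\circ\mathcal V^{n-i}$ (span of products); $\mathcal A^2=\mathcal A\circ\mathcal A$. *)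

theory Defs
  imports Complex_Main
begin

text \<open>Degrees are encoded as nats 0 and 1.\<close>

definition superalgebra ::
  "('k::field \<Rightarrow> 'a::ab_group_add \<Rightarrow> 'a) \<Rightarrow> (nat \<Rightarrow> 'a set) \<Rightarrow> ('a \<Rightarrow> 'a \<Rightarrow> 'a) \<Rightarrow> bool" where
  "superalgebra scale G mult \<longleftrightarrow>
     vector_space scale \<and>
     module.subspace scale (G 0) \<and> module.subspace scale (G 1) \<and>
     G 0 \<inter> G 1 = {0} \<and>
     (\<forall>x. \<exists>a\<in>G 0. \<exists>b\<in>G 1. x = a + b) \<and>
     (\<forall>x. Vector_Spaces.linear scale scale (mult x)) \<and>
     (\<forall>y. Vector_Spaces.linear scale scale (\<lambda>x. mult x y)) \<and>
     (\<forall>i<2. \<forall>j<2. \<forall>x\<in>G i. \<forall>y\<in>G j. mult x y \<in> G ((i + j) mod 2))"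

text \<open>GDN superalgebra: the two super-identities for homogeneous x, y, z
  (for x = 0 etc. they hold trivially by bilinearity, so we quantify over all elements
  of the homogeneous components).\<close>

definition gdn_superalgebra ::
  "('k::field \<Rightarrow> 'a::ab_group_add \<Rightarrow> 'a) \<Rightarrow> (nat \<Rightarrow> 'a set) \<Rightarrow> ('a \<Rightarrow> 'a \<Rightarrow> 'a) \<Rightarrow> bool" where
  "gdn_superalgebra scale G mult \<longleftrightarrow>
     superalgebra scale G mult \<and>
     (\<forall>i<2. \<forall>j<2. \<forall>k<2. \<forall>x\<in>G i. \<forall>y\<in>G j. \<forall>z\<in>G k.
        mult x (mult y z) - mult (mult x y) z
          = scale ((-1) ^ (i * j)) (mult y (mult x z) - mult (mult y x) z) \<and>
        mult (mult x y) z = scale ((-1) ^ (j * k)) (mult (mult x z) y))"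

definition lprod :: "('a \<Rightarrow> 'a \<Rightarrow> 'a) \<Rightarrow> 'a \<Rightarrow> 'a list \<Rightarrow> 'a" where
  "lprod mult x xs = foldl mult x xs"

definition left_power ::
  "('k::field \<Rightarrow> 'a::ab_group_add \<Rightarrow> 'a) \<Rightarrow> ('a \<Rightarrow> 'a \<Rightarrow> 'a) \<Rightarrow> nat \<Rightarrow> 'a set" where
  "left_power scale mult n =
     module.span scale {lprod mult x xs | x xs. length xs + 1 = n}"

definition prod_space ::
  "('k::field \<Rightarrow> 'a::ab_group_add \<Rightarrow> 'a) \<Rightarrow> ('a \<Rightarrow> 'a \<Rightarrow> 'a) \<Rightarrow> 'a set \<Rightarrow> 'a set \<Rightarrow> 'a set" where
  "prod_space scale mult V W = module.span scale {mult v w | v w. v \<in> V \<and> w \<in> W}"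

definition square_space ::
  "('k::field \<Rightarrow> 'a::ab_group_add \<Rightarrow> 'a) \<Rightarrow> ('a \<Rightarrow> 'a \<Rightarrow> 'a) \<Rightarrow> 'a set" where
  "square_space scale mult = prod_space scale mult UNIV UNIV"

text \<open>Powers of a subspace: V^1 = V, V^n = sum_{i=1}^{n-1} V^i o V^(n-i)
  (the span of all products a o b with a in V^i, b in V^(n-i), 1 \<le> i < n).
  V^0 is not used; it is set to {0}.\<close>

function sub_power ::
  "('k::field \<Rightarrow> 'a::ab_group_add \<Rightarrow> 'a) \<Rightarrow> ('a \<Rightarrow> 'a \<Rightarrow> 'a) \<Rightarrow> 'a set \<Rightarrow> nat \<Rightarrow> 'a set" where
  "sub_power scale mult V n =
     (if n = 0 then {0} else if n = 1 then V else
      module.span scale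
        (\<Union>i\<in>{1..<n}. {mult a b | a b.
             a \<in> sub_power scale mult V i \<and> b \<in> sub_power scale mult V (n - i)}))"
  by pat_completeness auto
termination
  by (relation "measure (\<lambda>(_, _, _, n). n)") auto

definition is_ideal ::
  "('k::field \<Rightarrow> 'a::ab_group_add \<Rightarrow> 'a) \<Rightarrow> ('a \<Rightarrow> 'a \<Rightarrow> 'a) \<Rightarrow> 'a set \<Rightarrow> bool" where
  "is_ideal scale mult I \<longleftrightarrow>
     module.subspace scale I \<and> (\<forall>a\<in>I. \<forall>x. mult a x \<in> I \<and> mult x a \<in> I)"

end

theory Submission
  imports Defs
begin

text \<open>Every element is a sum of homogeneous ones, so by bilinearity each claim need only be
  checked on left-normed products of homogeneous elements; these are homogeneous themselves,
  so the two graded identities apply to them. Right multiplication lengthens a left-normed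
  product by one factor, and merging the first two factors shows that the powers \<open>A\<^sup>n\<^sub>L\<close>
  decrease; hence \<open>A\<^sup>n\<^sub>L\<close> is a right ideal. Left symmetry
  \<open>t(uv) = \<plusminus>(u(tv) - (ut)v) + (tu)v\<close> makes it a left ideal by induction on \<open>n\<close>, and right
  commutativity \<open>(uv)s = \<plusminus>(us)v\<close> gives \<open>A\<^sup>p\<^sub>L A\<^sup>q\<^sub>L \<subseteq> A\<^bsup>p+q-1\<^esup>\<^sub>L\<close> by induction on \<open>p\<close>. Since
  \<open>A\<^sup>2 = A\<^sup>2\<^sub>L\<close>, the last inclusion yields \<open>(A\<^sup>2)\<^sup>n \<subseteq> A\<^bsup>n+1\<^esup>\<^sub>L\<close> by induction on \<open>n\<close>.\<close>

declare sub_power.simps[simp del]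

lemma lprod_Nil [simp]: "lprod mult x [] = x"
  by (simp add: lprod_def)

lemma lprod_Cons: "lprod mult x (y # xs) = lprod mult (mult x y) xs"
  by (simp add: lprod_def)

lemma lprod_snoc [simp]: "lprod mult x (xs @ [z]) = mult (lprod mult x xs) z"
  by (simp add: lprod_def)

lemma sub_power_one: "sub_power scale mult V 1 = V"
  by (simp add: sub_power.simps)

lemma sub_power_ge_two:
  "2 \<le> n \<Longrightarrow> sub_power scale mult V n = module.span scale
     (\<Union>i\<in>{1..<n}. {mult a b | a b. a \<in> sub_power scale mult V i \<and> b \<in> sub_power scale mult V (n - i)})"
  by (subst sub_power.simps) simp

locale bilinear_product = vector_space scale for scale :: "'k::field \<Rightarrow> 'a::ab_group_add \<Rightarrow> 'a" +
  fixes mult :: "'a \<Rightarrow> 'a \<Rightarrow> 'a"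
  assumes linear_mult_left: "Vector_Spaces.linear scale scale (\<lambda>x. mult x y)"
    and linear_mult_right: "Vector_Spaces.linear scale scale (mult x)"
begin

lemma mult_span_mem:
  assumes "a \<in> span S" "b \<in> span T" "subspace U"
    and "\<And>s t. s \<in> S \<Longrightarrow> t \<in> T \<Longrightarrow> mult s t \<in> U"
  shows "mult a b \<in> U"
proof -
  interpret vector_space_pair scale scale ..
  have "span T \<subseteq> mult s -` U" if "s \<in> S" for s
    using assms(3,4) that by (intro span_minimal linear_subspace_vimage[OF linear_mult_right]) auto
  then have "span S \<subseteq> (\<lambda>x. mult x b) -` U"
    using assms(2,3) by (intro span_minimal linear_subspace_vimage[OF linear_mult_left]) auto
  with assms(1) show ?thesis by auto
qed

abbreviation L :: "nat \<Rightarrow> 'a set" where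
  "L n \<equiv> left_power scale mult n"

lemma subspace_left_power: "subspace (L n)"
  by (simp add: left_power_def)

lemma lprod_in_left_power: "lprod mult x xs \<in> L (length xs + 1)"
  unfolding left_power_def by (rule span_base) blast

lemma left_power_one: "L 1 = UNIV"
  using lprod_in_left_power[of _ "[]"] by auto

lemma left_power_mult_right: "a \<in> L n \<Longrightarrow> mult a z \<in> L (Suc n)"
  unfolding left_power_def[of _ _ n]
proof (erule mult_span_mem[OF _ span_base[OF singletonI] subspace_left_power])
  fix s t assume "s \<in> {lprod mult x xs | x xs. length xs + 1 = n}" "t \<in> {z}"
  then show "mult s t \<in> L (Suc n)"
    using lprod_in_left_power[of _ "_ @ [z]"] by auto
qed

lemma left_power_Suc_subset: "1 \<le> n \<Longrightarrow> L (Suc n) \<subseteq> L n"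
  unfolding left_power_def[of _ _ "Suc n"]
proof (intro span_minimal subspace_left_power, clarify)
  fix x and xs :: "'a list" assume "1 \<le> n" "length xs + 1 = Suc n"
  then obtain y ys where "xs = y # ys" "length ys + 1 = n" by (cases xs) auto
  then show "lprod mult x xs \<in> L n"
    using lprod_in_left_power[of "mult x y" ys] by (simp add: lprod_Cons)
qed

end

locale gdn_algebra = vector_space scale for scale :: "'k::field \<Rightarrow> 'a::ab_group_add \<Rightarrow> 'a" +
  fixes G :: "nat \<Rightarrow> 'a set" and mult :: "'a \<Rightarrow> 'a \<Rightarrow> 'a"
  assumes gdn: "gdn_superalgebra scale G mult"
begin

sublocale bilinear_product scale mult
  using vector_space_axioms gdn
  by (simp add: bilinear_product_def bilinear_product_axioms_def gdn_superalgebra_def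
      superalgebra_def)

lemma homogeneous_decomposition: "\<exists>a\<in>G 0. \<exists>b\<in>G 1. x = a + b"
  using gdn by (simp add: gdn_superalgebra_def superalgebra_def)

lemma mult_graded:
  "i < 2 \<Longrightarrow> j < 2 \<Longrightarrow> x \<in> G i \<Longrightarrow> y \<in> G j \<Longrightarrow> mult x y \<in> G ((i + j) mod 2)"
  using gdn by (simp add: gdn_superalgebra_def superalgebra_def)

lemma left_symmetric:
  "\<lbrakk>i < 2; j < 2; k < 2; x \<in> G i; y \<in> G j; z \<in> G k\<rbrakk> \<Longrightarrow>
   mult x (mult y z) = scale ((-1) ^ (i * j)) (mult y (mult x z) - mult (mult y x) z) + mult (mult x y) z"
  using gdn unfolding gdn_superalgebra_def by (metis diff_add_cancel)

lemma right_commutative: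
  "\<lbrakk>i < 2; j < 2; k < 2; x \<in> G i; y \<in> G j; z \<in> G k\<rbrakk> \<Longrightarrow>
   mult (mult x y) z = scale ((-1) ^ (j * k)) (mult (mult x z) y)"
  using gdn unfolding gdn_superalgebra_def by blast

definition homogeneous :: "'a set" where
  "homogeneous = {x. \<exists>i<2. x \<in> G i}"

lemma in_span_homogeneous: "x \<in> span homogeneous"
proof -
  obtain a b where "a \<in> G 0" "b \<in> G 1" "x = a + b"
    using homogeneous_decomposition by blast
  moreover have "G 0 \<subseteq> homogeneous" "G 1 \<subseteq> homogeneous"
    unfolding homogeneous_def by force+
  ultimately show ?thesis by (metis span_add span_base subsetD)
qed

lemma homogeneousE:
  assumes "x \<in> homogeneous"
  obtains i where "i < 2" "x \<in> G i"
  using assms unfolding homogeneous_def by blast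

lemma mult_homogeneous: "a \<in> homogeneous \<Longrightarrow> b \<in> homogeneous \<Longrightarrow> mult a b \<in> homogeneous"
  unfolding homogeneous_def by (force dest: mult_graded)

lemma lprod_homogeneous:
  "x \<in> homogeneous \<Longrightarrow> set xs \<subseteq> homogeneous \<Longrightarrow> lprod mult x xs \<in> homogeneous"
  by (induction xs arbitrary: x) (auto simp: lprod_Cons mult_homogeneous)

definition homogeneous_lprods :: "nat \<Rightarrow> 'a set" where
  "homogeneous_lprods n =
     {lprod mult x xs | x xs. x \<in> homogeneous \<and> set xs \<subseteq> homogeneous \<and> length xs + 1 = n}"

lemma homogeneous_lprods_homogeneous: "s \<in> homogeneous_lprods n \<Longrightarrow> s \<in> homogeneous"
  unfolding homogeneous_lprods_def using lprod_homogeneous by blast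

lemma homogeneous_lprods_one: "homogeneous_lprods 1 = homogeneous"
  by (auto simp: homogeneous_lprods_def intro!: exI[of _ "[]"])

lemma homogeneous_lprods_Suc:
  assumes "1 \<le> n"
  shows "homogeneous_lprods (Suc n) =
    {mult u v | u v. u \<in> homogeneous_lprods n \<and> v \<in> homogeneous}"
proof safe
  fix s assume "s \<in> homogeneous_lprods (Suc n)"
  then obtain x xs where s: "s = lprod mult x xs" "x \<in> homogeneous" "set xs \<subseteq> homogeneous"
    "length xs = n" unfolding homogeneous_lprods_def by auto
  with assms have "xs \<noteq> []" by auto
  then obtain ys v where xs: "xs = ys @ [v]" by (metis rev_exhaust)
  have "lprod mult x ys \<in> homogeneous_lprods n"
    unfolding homogeneous_lprods_def using s xs by fastforce
  moreover have "s = mult (lprod mult x ys) v" "v \<in> homogeneous"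
    using s xs by auto
  ultimately show "\<exists>u v. s = mult u v \<and> u \<in> homogeneous_lprods n \<and> v \<in> homogeneous"
    by blast
next
  fix u v assume "u \<in> homogeneous_lprods n" "v \<in> homogeneous"
  then obtain x xs where "u = lprod mult x xs" "x \<in> homogeneous" "set xs \<subseteq> homogeneous"
    "length xs + 1 = n" unfolding homogeneous_lprods_def by auto
  with \<open>v \<in> homogeneous\<close> have "mult u v = lprod mult x (xs @ [v])"
    "set (xs @ [v]) \<subseteq> homogeneous" "length (xs @ [v]) + 1 = Suc n"
    by auto
  with \<open>x \<in> homogeneous\<close> show "mult u v \<in> homogeneous_lprods (Suc n)"
    unfolding homogeneous_lprods_def by blast
qed

lemma left_power_eq_span_homogeneous_lprods: "1 \<le> n \<Longrightarrow> L n = span (homogeneous_lprods n)"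
proof (induction n rule: nat_induct_at_least)
  case base
  have "span homogeneous = UNIV" using in_span_homogeneous by auto
  then show ?case by (metis left_power_one homogeneous_lprods_one)
next
  case (Suc n)
  show ?case
  proof
    show "span (homogeneous_lprods (Suc n)) \<subseteq> L (Suc n)"
      using Suc by (intro span_minimal subspace_left_power)
        (auto simp: homogeneous_lprods_Suc intro: left_power_mult_right span_base)
    show "L (Suc n) \<subseteq> span (homogeneous_lprods (Suc n))"
      unfolding left_power_def[of _ _ "Suc n"]
    proof (intro span_minimal local.subspace_span, clarify)
      fix x and xs :: "'a list" assume len: "length xs + 1 = Suc n"
      with Suc.hyps have "xs \<noteq> []" by auto
      then obtain ys z where xs: "xs = ys @ [z]" by (metis rev_exhaust)
      have "lprod mult x ys \<in> span (homogeneous_lprods n)"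
        using Suc.IH lprod_in_left_power[of x ys] len xs by simp
      then have "mult (lprod mult x ys) z \<in> span (homogeneous_lprods (Suc n))"
        by (rule mult_span_mem[OF _ in_span_homogeneous local.subspace_span])
          (auto simp: homogeneous_lprods_Suc[OF Suc.hyps] intro: span_base)
      then show "lprod mult x xs \<in> span (homogeneous_lprods (Suc n))"
        using xs by simp
    qed
  qed
qed

lemma left_power_mult_left: "1 \<le> n \<Longrightarrow> a \<in> L n \<Longrightarrow> mult y a \<in> L n"
proof (induction n arbitrary: y a rule: nat_induct_at_least)
  case base
  then show ?case by (metis UNIV_I One_nat_def left_power_one)
next
  case (Suc n)
  show ?case
  proof (rule mult_span_mem[OF in_span_homogeneous _ subspace_left_power])
    show "a \<in> span (homogeneous_lprods (Suc n))"
      using Suc left_power_eq_span_homogeneous_lprods by simp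
    fix t s assume t: "t \<in> homogeneous" and "s \<in> homogeneous_lprods (Suc n)"
    then obtain u v where uv: "s = mult u v" "u \<in> homogeneous_lprods n" "v \<in> homogeneous"
      by (auto simp: homogeneous_lprods_Suc[OF Suc.hyps])
    obtain i j k where ijk: "i < 2" "j < 2" "k < 2" "t \<in> G i" "u \<in> G j" "v \<in> G k"
      using homogeneousE[OF t] homogeneousE[OF homogeneous_lprods_homogeneous[OF uv(2)]]
        homogeneousE[OF uv(3)] by metis
    have u: "u \<in> L n"
      using uv(2) Suc.hyps left_power_eq_span_homogeneous_lprods span_base by blast
    have "mult (mult t u) v \<in> L (Suc n)"
      using Suc.IH[OF u] by (rule left_power_mult_right)
    moreover have "mult u (mult t v) \<in> L (Suc n)"
      using u by (rule left_power_mult_right)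
    moreover have "mult (mult u t) v \<in> L (Suc n)"
      using left_power_mult_right[OF left_power_mult_right[OF u]] left_power_Suc_subset[of "Suc n"]
      by auto
    ultimately show "mult t s \<in> L (Suc n)"
      unfolding uv(1) left_symmetric[OF ijk]
      by (intro subspace_add subspace_scale subspace_diff subspace_left_power)
  qed
qed

lemma left_power_mult:
  "1 \<le> p \<Longrightarrow> 1 \<le> q \<Longrightarrow> a \<in> L p \<Longrightarrow> b \<in> L q \<Longrightarrow> mult a b \<in> L (p + q - 1)"
proof (induction p arbitrary: a b rule: nat_induct_at_least)
  case base
  then show ?case by (simp add: left_power_mult_left)
next
  case (Suc p)
  show ?case
  proof (rule mult_span_mem[OF _ _ subspace_left_power])
    show "a \<in> span (homogeneous_lprods (Suc p))" "b \<in> span (homogeneous_lprods q)"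
      using Suc left_power_eq_span_homogeneous_lprods by auto
    fix r s assume "r \<in> homogeneous_lprods (Suc p)" and s: "s \<in> homogeneous_lprods q"
    then obtain u v where uv: "r = mult u v" "u \<in> homogeneous_lprods p" "v \<in> homogeneous"
      by (auto simp: homogeneous_lprods_Suc[OF Suc.hyps])
    obtain i j k where ijk: "i < 2" "j < 2" "k < 2" "u \<in> G i" "v \<in> G j" "s \<in> G k"
      using homogeneousE[OF homogeneous_lprods_homogeneous[OF uv(2)]] homogeneousE[OF uv(3)]
        homogeneousE[OF homogeneous_lprods_homogeneous[OF s]] by metis
    have "u \<in> L p"
      using Suc.hyps uv(2) by (simp add: left_power_eq_span_homogeneous_lprods span_base)
    moreover have "s \<in> L q"
      using Suc.prems(1) s by (simp add: left_power_eq_span_homogeneous_lprods span_base)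
    ultimately have "mult (mult u s) v \<in> L (Suc (p + q - 1))"
      using Suc.IH Suc.prems(1) by (blast intro: left_power_mult_right)
    moreover have "Suc (p + q - 1) = Suc p + q - 1"
      using Suc.hyps by simp
    ultimately show "mult r s \<in> L (Suc p + q - 1)"
      unfolding uv(1) right_commutative[OF ijk] by (metis subspace_scale subspace_left_power)
  qed
qed

lemma is_ideal_left_power:
  assumes "1 \<le> n"
  shows "is_ideal scale mult (L n)"
  unfolding is_ideal_def
proof (intro conjI ballI allI subspace_left_power)
  fix a x assume "a \<in> L n"
  then show "mult a x \<in> L n"
    using assms left_power_Suc_subset left_power_mult_right by blast
  show "mult x a \<in> L n"
    using assms \<open>a \<in> L n\<close> by (rule left_power_mult_left)
qed

lemma sub_power_square_subset_left_power:
  "1 \<le> n \<Longrightarrow> sub_power scale mult (square_space scale mult) n \<subseteq> L (n + 1)"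
proof (induction n rule: less_induct)
  case (less n)
  show ?case
  proof (cases "n = 1")
    case True
    show ?thesis
      unfolding True sub_power_one square_space_def prod_space_def
    proof (intro span_minimal subspace_left_power, clarify)
      fix v w
      show "mult v w \<in> L (1 + 1)"
        using lprod_in_left_power[of v "[w]"] by (simp add: lprod_Cons)
    qed
  next
    case False
    with less.prems have "2 \<le> n" by simp
    show ?thesis
      unfolding sub_power_ge_two[OF \<open>2 \<le> n\<close>]
    proof (intro span_minimal subspace_left_power, clarify)
      fix i a b assume i: "i \<in> {1..<n}"
        and a: "a \<in> sub_power scale mult (square_space scale mult) i"
        and b: "b \<in> sub_power scale mult (square_space scale mult) (n - i)"
      have "n - i < n" "1 \<le> n - i" using i by auto
      then have "a \<in> L (i + 1)" "b \<in> L (n - i + 1)"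
        using less.IH[of i] less.IH[of "n - i"] i a b by auto
      then have "mult a b \<in> L ((i + 1) + (n - i + 1) - 1)"
        by (intro left_power_mult) auto
      with i show "mult a b \<in> L (n + 1)" by simp
    qed
  qed
qed

end

theorem lemma4p2:
  fixes scale :: "'k::field \<Rightarrow> 'a::ab_group_add \<Rightarrow> 'a"
    and G :: "nat \<Rightarrow> 'a set"
    and mult :: "'a \<Rightarrow> 'a \<Rightarrow> 'a"
    and n :: nat
  assumes "gdn_superalgebra scale G mult"
    and "n \<ge> 1"
  shows "is_ideal scale mult (left_power scale mult n) \<and>
         sub_power scale mult (square_space scale mult) n \<subseteq> left_power scale mult (n + 1)"
proof -
  have "vector_space scale"
    using assms(1) by (simp add: gdn_superalgebra_def superalgebra_def)
  then interpret gdn_algebra scale G mult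
    using assms(1) by (simp add: gdn_algebra_def gdn_algebra_axioms_def)
  show ?thesis
    using is_ideal_left_power sub_power_square_subset_left_power assms(2) by simp
qed

end
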